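(* Let $M$ be a free $\mathbb{T}$-module with a finite $\mathbb{T}$-basis, $V$ its associated complex vector space, and $(\cdot,\cdot)$ a bicomplex scalar product on $M$ which is hyperbolic positive and closed on $V$. Then $\{M,(\cdot,\cdot)\}$ is a $\mathbb{T}$-Hilbert space if and only if $V$ with the restriction of $(\cdot,\cdot)$ is a (complex) Hilbert space.
   Context: Bicomplex numbers: $\mathbb{T}=\{z_1+z_2\mathbf{i_2}: z_1,z_2\in\mathbb{C}(\mathbf{i_1})\}$, $\mathbb{C}(\mathbf{i_1})=\{x+y\mathbf{i_1}: x,y\in\mathbb{R}\}$, $\mathbf{i_1}^2=\mathbf{i_2}^2=-1$, $\mathbf{i_1}\mathbf{i_2}=\mathbf{i_2}\mathbf{i_1}=\mathbf{j}$, $\mathbf{j}^2=1$ (commutative). Hyperbolic numbers $\mathbb{D}=\{x+y\mathbf{j}:x,y\in\mathbb{R}\}$. Idempotents $\mathbf{e_1}=(1+\mathbf{j})/2$, $\mathbf{e_2}=(1-\mathbf{j})/2$. Conjugation: $(z_1+z_2\mathbf{i_2})^{\dagger_3}=\overline{z_1}-\overline{z_2}\mathbf{i_2}$. $\mathbb{D}^+=\{a\mathbf{e_1}+b\mathbf{e_2}: a,b\ge 0\}$. $M$ has $\mathbb{T}$-basis $\{\widehat m_1,\dots,\widehat m_n\}$, $V=\{\sum x_l\widehat m_l: x_l\in\mathbb{C}(\mathbf{i_1})\}$; for $\widehat X=\sum x_l\widehat m_l$ with $x_l=x_{1l}\mathbf{e_1}+x_{2l}\mathbf{e_2}$, $x_{kl}\in\mathbb{C}(\mathbf{i_1})$,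 put $\widehat X_{\mathbf{e_k}}=\sum_l x_{kl}\widehat m_l\in V$. A bicomplex scalar product is a map $(\cdot,\cdot):M\times M\to\mathbb{T}$ with: $(\widehat X,\widehat Y_1+\widehat Y_2)=(\widehat X,\widehat Y_1)+(\widehat X,\widehat Y_2)$; $(\widehat X,\alpha\widehat Y)=\alpha(\widehat X,\widehat Y)$ for $\alpha\in\mathbb{T}$; $(\widehat X,\widehat Y)=(\widehat Y,\widehat X)^{\dagger_3}$; $(\widehat X,\widehat X)=0\iff\widehat X=0$. Hyperbolic positive: $(\widehat X,\widehat X)\in\mathbb{D}^+$ for all $\widehat X$. Closed on $V$: $(\widehat X,\widehat Y)\in\mathbb{C}(\mathbf{i_1})$ for $\widehat X,\widehat Y\in V$. For $\widehat Z\in V$, $\|\widehat Z\|=(\widehat Z,\widehat Z)^{1/2}$; for $\widehat X\in M$, $\|\widehat X\|:=\big((\|\widehat X_{\mathbf{e_1}}\|^2+\|\widehat X_{\mathbf{e_2}}\|^2)/2\big)^{1/2}$, and $d(\widehat X,\widehat Y)=\|\widehat X-\widehat Y\|$. $\{M,(\cdot,\cdot)\}$ is called a $\mathbb{T}$-Hilbert space if $M$ is complete with respect to $d$. *)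

theory Defs
  imports "HOL-Analysis.Analysis"
begin

text \<open>A bicomplex number z1 + z2 i2 with z1, z2 in C(i1); the Isabelle imaginary unit
  of type complex plays the role of i1.\<close>

datatype bicomplex = BC (bc1: complex) (bc2: complex)

instantiation bicomplex :: comm_ring_1
begin
definition "0 = BC 0 0"
definition "1 = BC 1 0"
definition "x + y = BC (bc1 x + bc1 y) (bc2 x + bc2 y)"
definition "x - y = BC (bc1 x - bc1 y) (bc2 x - bc2 y)"
definition "- x = BC (- bc1 x) (- bc2 x)"
definition "x * y = BC (bc1 x * bc1 y - bc2 x * bc2 y) (bc1 x * bc2 y + bc2 x * bc1 y)"
instance
  by standard
     (auto simp: zero_bicomplex_def one_bicomplex_def plus_bicomplex_def
        minus_bicomplex_def uminus_bicomplex_def times_bicomplex_def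
        algebra_simps intro!: bicomplex.expand)
end

definition of_ci1 :: "complex \<Rightarrow> bicomplex" where
  "of_ci1 z = BC z 0"

definition Ci1 :: "bicomplex set" where
  "Ci1 = {BC z 0 | z. True}"

definition bc_i1 :: bicomplex where "bc_i1 = BC \<i> 0"
definition bc_i2 :: bicomplex where "bc_i2 = BC 0 1"
definition bc_j :: bicomplex where "bc_j = bc_i1 * bc_i2"

definition bc_e1 :: bicomplex where "bc_e1 = (1 + bc_j) * BC (1/2) 0"
definition bc_e2 :: bicomplex where "bc_e2 = (1 - bc_j) * BC (1/2) 0"

definition hyperbolic :: "bicomplex set" where
  "hyperbolic = {of_ci1 (complex_of_real x) + of_ci1 (complex_of_real y) * bc_j | x y. True}"

definition hyperbolic_pos :: "bicomplex set" where
  "hyperbolic_pos = {of_ci1 (complex_of_real a) * bc_e1 + of_ci1 (complex_of_real b) * bc_e2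
                      | a b. a \<ge> 0 \<and> b \<ge> 0}"

definition conj3 :: "bicomplex \<Rightarrow> bicomplex" where
  "conj3 x = BC (cnj (bc1 x)) (- cnj (bc2 x))"

text \<open>Idempotent components: x = idem1 x e1 + idem2 x e2 with idem_k x in C(i1),
  i.e. idem1 (z1 + z2 i2) = z1 - i1 z2, idem2 (z1 + z2 i2) = z1 + i1 z2.\<close>
definition idem1 :: "bicomplex \<Rightarrow> complex" where
  "idem1 x = bc1 x - \<i> * bc2 x"
definition idem2 :: "bicomplex \<Rightarrow> complex" where
  "idem2 x = bc1 x + \<i> * bc2 x"

text \<open>M is the carrier type 'm with T-scalar multiplication sc; B is a finite T-basis.\<close>
definition free_T_module_fin_basis ::
  "(bicomplex \<Rightarrow> 'm::ab_group_add \<Rightarrow> 'm) \<Rightarrow> 'm set \<Rightarrow> bool" where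
  "free_T_module_fin_basis sc B \<longleftrightarrow>
     module sc \<and> finite B \<and> module.independent sc B \<and> module.span sc B = UNIV"

definition assoc_V :: "(bicomplex \<Rightarrow> 'm::ab_group_add \<Rightarrow> 'm) \<Rightarrow> 'm set \<Rightarrow> 'm set" where
  "assoc_V sc B = {(\<Sum>b\<in>B. sc (of_ci1 (x b)) b) | x. True}"

text \<open>X_{e1}, X_{e2}: X = sum x_l m_l, x_l = x_{1l} e1 + x_{2l} e2, X_{ek} = sum x_{kl} m_l.\<close>
definition comp_e1 :: "(bicomplex \<Rightarrow> 'm::ab_group_add \<Rightarrow> 'm) \<Rightarrow> 'm set \<Rightarrow> 'm \<Rightarrow> 'm" where
  "comp_e1 sc B X = (\<Sum>b\<in>B. sc (of_ci1 (idem1 (module.representation sc B X b))) b)"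
definition comp_e2 :: "(bicomplex \<Rightarrow> 'm::ab_group_add \<Rightarrow> 'm) \<Rightarrow> 'm set \<Rightarrow> 'm \<Rightarrow> 'm" where
  "comp_e2 sc B X = (\<Sum>b\<in>B. sc (of_ci1 (idem2 (module.representation sc B X b))) b)"

definition bicomplex_scalar_product ::
  "(bicomplex \<Rightarrow> 'm::ab_group_add \<Rightarrow> 'm) \<Rightarrow> ('m \<Rightarrow> 'm \<Rightarrow> bicomplex) \<Rightarrow> bool" where
  "bicomplex_scalar_product sc ip \<longleftrightarrow>
     (\<forall>X Y1 Y2. ip X (Y1 + Y2) = ip X Y1 + ip X Y2) \<and>
     (\<forall>X Y \<alpha>. ip X (sc \<alpha> Y) = \<alpha> * ip X Y) \<and>
     (\<forall>X Y. ip X Y = conj3 (ip Y X)) \<and>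
     (\<forall>X. ip X X = 0 \<longleftrightarrow> X = 0)"

definition hyperbolic_positive :: "('m \<Rightarrow> 'm \<Rightarrow> bicomplex) \<Rightarrow> bool" where
  "hyperbolic_positive ip \<longleftrightarrow> (\<forall>X. ip X X \<in> hyperbolic_pos)"

definition closed_on :: "('m \<Rightarrow> 'm \<Rightarrow> bicomplex) \<Rightarrow> 'm set \<Rightarrow> bool" where
  "closed_on ip V \<longleftrightarrow> (\<forall>X\<in>V. \<forall>Y\<in>V. ip X Y \<in> Ci1)"

text \<open>Norm on V: ||Z|| = (Z,Z)^(1/2) (the value (Z,Z) lies in C(i1); we take the
  square root of its real part, which is (Z,Z) itself under the hypotheses).\<close>
definition normV :: "('m \<Rightarrow> 'm \<Rightarrow> bicomplex) \<Rightarrow> 'm \<Rightarrow> real" where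
  "normV ip Z = sqrt (Re (bc1 (ip Z Z)))"

definition normM ::
  "(bicomplex \<Rightarrow> 'm::ab_group_add \<Rightarrow> 'm) \<Rightarrow> 'm set \<Rightarrow> ('m \<Rightarrow> 'm \<Rightarrow> bicomplex) \<Rightarrow> 'm \<Rightarrow> real" where
  "normM sc B ip X =
     sqrt (((normV ip (comp_e1 sc B X))\<^sup>2 + (normV ip (comp_e2 sc B X))\<^sup>2) / 2)"

definition complete_wrt :: "'a set \<Rightarrow> ('a \<Rightarrow> 'a \<Rightarrow> real) \<Rightarrow> bool" where
  "complete_wrt S d \<longleftrightarrow>
     (\<forall>f. (\<forall>n. f n \<in> S) \<longrightarrow>
          (\<forall>\<epsilon>::real>0. \<exists>N::nat. \<forall>m\<ge>N. \<forall>n\<ge>N. d (f m) (f n) < \<epsilon>) \<longrightarrow>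
          (\<exists>x\<in>S. \<forall>\<epsilon>::real>0. \<exists>N::nat. \<forall>n\<ge>N. d (f n) x < \<epsilon>))"

definition T_Hilbert_space ::
  "(bicomplex \<Rightarrow> 'm::ab_group_add \<Rightarrow> 'm) \<Rightarrow> 'm set \<Rightarrow> ('m \<Rightarrow> 'm \<Rightarrow> bicomplex) \<Rightarrow> bool" where
  "T_Hilbert_space sc B ip \<longleftrightarrow>
     bicomplex_scalar_product sc ip \<and>
     complete_wrt UNIV (\<lambda>X Y. normM sc B ip (X - Y))"

text \<open>V (a complex vector space with scalar multiplication z Z = sc (of_ci1 z) Z)
  together with the restricted scalar product (values read in C(i1)) is a complex
  Hilbert space: a complex inner product space (linear in the second argument,
  conjugate symmetric, positive definite) that is complete in the induced norm.\<close>
definition complex_Hilbert_space ::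
  "(bicomplex \<Rightarrow> 'm::ab_group_add \<Rightarrow> 'm) \<Rightarrow> 'm set \<Rightarrow> ('m \<Rightarrow> 'm \<Rightarrow> bicomplex) \<Rightarrow> bool" where
  "complex_Hilbert_space sc V ip \<longleftrightarrow>
     (0 \<in> V) \<and> (\<forall>X\<in>V. \<forall>Y\<in>V. X + Y \<in> V) \<and> (\<forall>z. \<forall>X\<in>V. sc (of_ci1 z) X \<in> V) \<and>
     (\<forall>X\<in>V. \<forall>Y\<in>V. ip X Y \<in> Ci1) \<and>
     (\<forall>X\<in>V. \<forall>Y1\<in>V. \<forall>Y2\<in>V. bc1 (ip X (Y1 + Y2)) = bc1 (ip X Y1) + bc1 (ip X Y2)) \<and>
     (\<forall>X\<in>V. \<forall>Y\<in>V. \<forall>z. bc1 (ip X (sc (of_ci1 z) Y)) = z * bc1 (ip X Y)) \<and>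
     (\<forall>X\<in>V. \<forall>Y\<in>V. bc1 (ip X Y) = cnj (bc1 (ip Y X))) \<and>
     (\<forall>X\<in>V. Im (bc1 (ip X X)) = 0 \<and> Re (bc1 (ip X X)) \<ge> 0) \<and>
     (\<forall>X\<in>V. bc1 (ip X X) = 0 \<longleftrightarrow> X = 0) \<and>
     complete_wrt V (\<lambda>X Y. normV ip (X - Y))"

end

theory Submission
  imports Defs
begin

text \<open>Every X in M splits as X = e1 X_e1 + e2 X_e2 with X_e1, X_e2 in V, and this splitting
  is additive and onto V \<times> V. The norm of X is the quadratic mean of the norms of its two
  components, hence comparable to their sum, and it agrees with the norm of V on V. So Cauchy
  sequences and limits in M and in V \<times> V correspond, and M is complete iff V is. The other
  Hilbert space axioms for V are the C(i1)-parts of the axioms of the bicomplex scalar product,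
  because a hyperbolic positive number has a nonnegative real first coordinate, which vanishes
  only at 0.\<close>

lemma bicomplex_component_simps [simp]:
  "bc1 (x + y) = bc1 x + bc1 y" "bc2 (x + y) = bc2 x + bc2 y"
  "bc1 (x - y) = bc1 x - bc1 y" "bc2 (x - y) = bc2 x - bc2 y"
  "bc1 (x * y) = bc1 x * bc1 y - bc2 x * bc2 y" "bc2 (x * y) = bc1 x * bc2 y + bc2 x * bc1 y"
  "bc1 0 = 0" "bc2 0 = 0" "bc1 1 = 1" "bc2 1 = 0"
  by (simp_all add: plus_bicomplex_def minus_bicomplex_def times_bicomplex_def
      zero_bicomplex_def one_bicomplex_def)

lemma bc_e1_eq: "bc_e1 = BC (1/2) (\<i>/2)"
  by (rule bicomplex.expand) (simp add: bc_e1_def bc_j_def bc_i1_def bc_i2_def)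

lemma bc_e2_eq: "bc_e2 = BC (1/2) (- \<i>/2)"
  by (rule bicomplex.expand) (simp add: bc_e2_def bc_j_def bc_i1_def bc_i2_def)

lemma of_ci1_0 [simp]: "of_ci1 0 = 0"
  by (rule bicomplex.expand) (simp add: of_ci1_def)

lemma of_ci1_diff: "of_ci1 (x - y) = of_ci1 x - of_ci1 y"
  by (rule bicomplex.expand) (simp add: of_ci1_def)

lemma of_ci1_mult: "of_ci1 (x * y) = of_ci1 x * of_ci1 y"
  by (rule bicomplex.expand) (simp add: of_ci1_def)

lemma idem_of_ci1 [simp]: "idem1 (of_ci1 z) = z" "idem2 (of_ci1 z) = z"
  by (simp_all add: idem1_def idem2_def of_ci1_def)

lemma idem_diff: "idem1 (x - y) = idem1 x - idem1 y" "idem2 (x - y) = idem2 x - idem2 y"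
  by (simp_all add: idem1_def idem2_def algebra_simps)

lemma idem_idempotent_sum:
  "idem1 (bc_e1 * of_ci1 z + bc_e2 * of_ci1 w) = z"
  "idem2 (bc_e1 * of_ci1 z + bc_e2 * of_ci1 w) = w"
  by (simp_all add: idem1_def idem2_def of_ci1_def bc_e1_eq bc_e2_eq field_simps)

lemma hyperbolic_posE:
  assumes "x \<in> hyperbolic_pos"
  obtains a b :: real where "0 \<le> a" "0 \<le> b" "x = BC ((a + b) / 2) (\<i> * (a - b) / 2)"
proof -
  from assms obtain a b :: real where ab: "0 \<le> a" "0 \<le> b"
    "x = of_ci1 (complex_of_real a) * bc_e1 + of_ci1 (complex_of_real b) * bc_e2"
    unfolding hyperbolic_pos_def by blast
  have "x = BC ((a + b) / 2) (\<i> * (a - b) / 2)"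
    unfolding ab(3) by (rule bicomplex.expand) (simp add: of_ci1_def bc_e1_eq bc_e2_eq field_simps)
  with ab that show ?thesis by blast
qed

lemma hyperbolic_pos_bc1_nonneg_real:
  assumes "x \<in> hyperbolic_pos"
  shows "Im (bc1 x) = 0" "0 \<le> Re (bc1 x)"
  using assms by (auto elim: hyperbolic_posE)

lemma hyperbolic_pos_bc1_eq_0_iff:
  assumes "x \<in> hyperbolic_pos"
  shows "bc1 x = 0 \<longleftrightarrow> x = 0"
proof
  assume "bc1 x = 0"
  with assms show "x = 0"
    by (elim hyperbolic_posE) (auto simp: complex_eq_iff zero_bicomplex_def)
qed simp

lemma normV_nonneg: "hyperbolic_positive ip \<Longrightarrow> 0 \<le> normV ip Z"
  unfolding hyperbolic_positive_def normV_def by (simp add: hyperbolic_pos_bc1_nonneg_real)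

lemma le_sqrt2_mult_quadratic_mean:
  fixes a b :: real
  shows "a \<le> sqrt 2 * sqrt ((a\<^sup>2 + b\<^sup>2) / 2)"
proof -
  have "a \<le> sqrt (a\<^sup>2)" by simp
  also have "\<dots> \<le> sqrt (a\<^sup>2 + b\<^sup>2)" by simp
  also have "\<dots> = sqrt 2 * sqrt ((a\<^sup>2 + b\<^sup>2) / 2)" by (simp flip: real_sqrt_mult)
  finally show ?thesis .
qed

lemma quadratic_mean_le_add:
  fixes a b :: real
  assumes "0 \<le> a" "0 \<le> b"
  shows "sqrt ((a\<^sup>2 + b\<^sup>2) / 2) \<le> a + b"
  using assms by (intro real_le_lsqrt) (auto simp: power2_sum)

lemma normV_comp_e_le:
  "normV ip (comp_e1 sc B X) \<le> sqrt 2 * normM sc B ip X"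
  "normV ip (comp_e2 sc B X) \<le> sqrt 2 * normM sc B ip X"
  unfolding normM_def using le_sqrt2_mult_quadratic_mean by (metis add.commute)+

lemma normM_le_normV_comp_e:
  "hyperbolic_positive ip \<Longrightarrow>
    normM sc B ip X \<le> normV ip (comp_e1 sc B X) + normV ip (comp_e2 sc B X)"
  unfolding normM_def by (intro quadratic_mean_le_add normV_nonneg)

definition cauchy_wrt :: "('a \<Rightarrow> 'a \<Rightarrow> real) \<Rightarrow> (nat \<Rightarrow> 'a) \<Rightarrow> bool" where
  "cauchy_wrt d f \<longleftrightarrow> (\<forall>\<epsilon>>0. \<exists>N. \<forall>m\<ge>N. \<forall>n\<ge>N. d (f m) (f n) < \<epsilon>)"

definition converges_wrt :: "('a \<Rightarrow> 'a \<Rightarrow> real) \<Rightarrow> (nat \<Rightarrow> 'a) \<Rightarrow> 'a \<Rightarrow> bool" where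
  "converges_wrt d f x \<longleftrightarrow> (\<forall>\<epsilon>>0. \<exists>N. \<forall>n\<ge>N. d (f n) x < \<epsilon>)"

lemma complete_wrtI:
  "(\<And>f. (\<And>n. f n \<in> S) \<Longrightarrow> cauchy_wrt d f \<Longrightarrow> \<exists>x\<in>S. converges_wrt d f x) \<Longrightarrow>
    complete_wrt S d"
  unfolding complete_wrt_def cauchy_wrt_def converges_wrt_def by blast

lemma complete_wrtD:
  "complete_wrt S d \<Longrightarrow> (\<And>n. f n \<in> S) \<Longrightarrow> cauchy_wrt d f \<Longrightarrow> \<exists>x\<in>S. converges_wrt d f x"
  unfolding complete_wrt_def cauchy_wrt_def converges_wrt_def by blast

lemma cauchy_wrt_scaled_bound:
  assumes "cauchy_wrt d f" "0 < C" "\<And>m n. d' (g m) (g n) \<le> C * d (f m) (f n)"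
  shows "cauchy_wrt d' g"
  unfolding cauchy_wrt_def
proof (intro allI impI)
  fix \<epsilon> :: real assume "0 < \<epsilon>"
  then obtain N where N: "\<forall>m\<ge>N. \<forall>n\<ge>N. d (f m) (f n) < \<epsilon> / C"
    using assms(1,2) unfolding cauchy_wrt_def by (meson divide_pos_pos)
  have "d' (g m) (g n) < \<epsilon>" if "m \<ge> N" "n \<ge> N" for m n
  proof -
    have "C * d (f m) (f n) < \<epsilon>"
      using N that assms(2) by (simp add: pos_less_divide_eq mult.commute)
    then show ?thesis using assms(3)[of m n] by linarith
  qed
  then show "\<exists>N. \<forall>m\<ge>N. \<forall>n\<ge>N. d' (g m) (g n) < \<epsilon>" by blast
qed

lemma converges_wrt_scaled_bound:
  assumes "converges_wrt d f x" "0 < C" "\<And>n. d' (g n) y \<le> C * d (f n) x"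
  shows "converges_wrt d' g y"
  unfolding converges_wrt_def
proof (intro allI impI)
  fix \<epsilon> :: real assume "0 < \<epsilon>"
  then obtain N where N: "\<forall>n\<ge>N. d (f n) x < \<epsilon> / C"
    using assms(1,2) unfolding converges_wrt_def by (meson divide_pos_pos)
  have "d' (g n) y < \<epsilon>" if "n \<ge> N" for n
  proof -
    have "C * d (f n) x < \<epsilon>"
      using N that assms(2) by (simp add: pos_less_divide_eq mult.commute)
    then show ?thesis using assms(3)[of n] by linarith
  qed
  then show "\<exists>N. \<forall>n\<ge>N. d' (g n) y < \<epsilon>" by blast
qed

lemma converges_wrt_add_bound:
  assumes "converges_wrt d1 f1 x1" "converges_wrt d2 f2 x2"
    and "\<And>n. d (g n) y \<le> d1 (f1 n) x1 + d2 (f2 n) x2"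
  shows "converges_wrt d g y"
  unfolding converges_wrt_def
proof (intro allI impI)
  fix \<epsilon> :: real assume "0 < \<epsilon>"
  then obtain N1 N2 where N1: "\<forall>n\<ge>N1. d1 (f1 n) x1 < \<epsilon> / 2"
    and N2: "\<forall>n\<ge>N2. d2 (f2 n) x2 < \<epsilon> / 2"
    using assms(1,2) unfolding converges_wrt_def by (meson half_gt_zero)
  have "d (g n) y < \<epsilon>" if "max N1 N2 \<le> n" for n
    using N1 N2 that assms(3)[of n] by fastforce
  then show "\<exists>N. \<forall>n\<ge>N. d (g n) y < \<epsilon>" by blast
qed

lemma assoc_V_memI: "Z = (\<Sum>b\<in>B. sc (of_ci1 (x b)) b) \<Longrightarrow> Z \<in> assoc_V sc B"
  unfolding assoc_V_def by blast

lemma assoc_VE: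
  assumes "Z \<in> assoc_V sc B"
  obtains x where "Z = (\<Sum>b\<in>B. sc (of_ci1 (x b)) b)"
  using assms unfolding assoc_V_def by blast

context
  fixes sc :: "bicomplex \<Rightarrow> 'm::ab_group_add \<Rightarrow> 'm" and B :: "'m set"
  assumes free: "free_T_module_fin_basis sc B"
begin

interpretation m: module sc
  using free unfolding free_T_module_fin_basis_def by blast

lemma finite_basis: "finite B" and independent_basis: "m.independent B"
  and span_basis: "m.span B = UNIV"
  using free unfolding free_T_module_fin_basis_def by auto

lemma representation_basis_sum:
  assumes "b' \<in> B"
  shows "m.representation B (\<Sum>b\<in>B. sc (c b) b) b' = c b'"
proof -
  have "m.representation B (\<Sum>b\<in>B. sc (c b) b) b' =
      (\<Sum>b\<in>B. m.representation B (sc (c b) b) b')"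
    using m.representation_sum[OF independent_basis, of B "\<lambda>b. sc (c b) b"] span_basis by simp
  also have "\<dots> = (\<Sum>b\<in>B. c b * (if b' = b then 1 else 0))"
    using m.representation_scale[OF independent_basis] m.representation_basis[OF independent_basis]
      m.span_base
    by (intro sum.cong) simp_all
  also have "\<dots> = c b'"
    using assms finite_basis by (simp add: if_distrib cong: if_cong)
  finally show ?thesis .
qed

lemma comp_e_basis_sum:
  "comp_e1 sc B (\<Sum>b\<in>B. sc (c b) b) = (\<Sum>b\<in>B. sc (of_ci1 (idem1 (c b))) b)"
  "comp_e2 sc B (\<Sum>b\<in>B. sc (c b) b) = (\<Sum>b\<in>B. sc (of_ci1 (idem2 (c b))) b)"
  unfolding comp_e1_def comp_e2_def by (simp_all add: representation_basis_sum cong: sum.cong)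

lemma comp_e_diff:
  "comp_e1 sc B (X - Y) = comp_e1 sc B X - comp_e1 sc B Y"
  "comp_e2 sc B (X - Y) = comp_e2 sc B X - comp_e2 sc B Y"
  unfolding comp_e1_def comp_e2_def using m.representation_diff[OF independent_basis, of Y X]
  by (simp_all add: span_basis idem_diff of_ci1_diff m.scale_left_diff_distrib sum_subtractf)

lemma comp_e_in_assoc_V: "comp_e1 sc B X \<in> assoc_V sc B" "comp_e2 sc B X \<in> assoc_V sc B"
  unfolding comp_e1_def comp_e2_def by (rule assoc_V_memI[OF refl])+

lemma comp_e_assoc_V:
  assumes "Z \<in> assoc_V sc B"
  shows "comp_e1 sc B Z = Z" "comp_e2 sc B Z = Z"
  using assms by (auto elim: assoc_VE simp: comp_e_basis_sum)

lemma comp_e_idempotent_sum: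
  assumes "Z1 \<in> assoc_V sc B" "Z2 \<in> assoc_V sc B"
  shows "comp_e1 sc B (sc bc_e1 Z1 + sc bc_e2 Z2) = Z1" "comp_e2 sc B (sc bc_e1 Z1 + sc bc_e2 Z2) = Z2"
proof -
  obtain x y where xy: "Z1 = (\<Sum>b\<in>B. sc (of_ci1 (x b)) b)" "Z2 = (\<Sum>b\<in>B. sc (of_ci1 (y b)) b)"
    using assms by (elim assoc_VE)
  have "sc bc_e1 Z1 + sc bc_e2 Z2 = (\<Sum>b\<in>B. sc (bc_e1 * of_ci1 (x b) + bc_e2 * of_ci1 (y b)) b)"
    unfolding xy by (simp add: m.scale_sum_right m.scale_left_distrib sum.distrib)
  then show "comp_e1 sc B (sc bc_e1 Z1 + sc bc_e2 Z2) = Z1" "comp_e2 sc B (sc bc_e1 Z1 + sc bc_e2 Z2) = Z2"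
    by (simp_all add: comp_e_basis_sum idem_idempotent_sum xy)
qed

lemma assoc_V_zero: "0 \<in> assoc_V sc B"
  by (rule assoc_V_memI[where x = "\<lambda>_. 0"]) simp

lemma assoc_V_diff:
  assumes "Z \<in> assoc_V sc B" "W \<in> assoc_V sc B"
  shows "Z - W \<in> assoc_V sc B"
proof -
  obtain x y where xy: "Z = (\<Sum>b\<in>B. sc (of_ci1 (x b)) b)" "W = (\<Sum>b\<in>B. sc (of_ci1 (y b)) b)"
    using assms by (elim assoc_VE)
  have "Z - W = (\<Sum>b\<in>B. sc (of_ci1 (x b - y b)) b)"
    unfolding xy by (simp add: of_ci1_diff m.scale_left_diff_distrib sum_subtractf)
  then show ?thesis by (rule assoc_V_memI)
qed

lemma assoc_V_add: "Z \<in> assoc_V sc B \<Longrightarrow> W \<in> assoc_V sc B \<Longrightarrow> Z + W \<in> assoc_V sc B"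
  using assoc_V_diff[of 0 W] assoc_V_diff[of Z "0 - W"] assoc_V_zero by simp

lemma assoc_V_scale:
  assumes "Z \<in> assoc_V sc B"
  shows "sc (of_ci1 z) Z \<in> assoc_V sc B"
proof -
  obtain x where x: "Z = (\<Sum>b\<in>B. sc (of_ci1 (x b)) b)"
    using assms by (rule assoc_VE)
  have "sc (of_ci1 z) Z = (\<Sum>b\<in>B. sc (of_ci1 (z * x b)) b)"
    unfolding x by (simp add: m.scale_sum_right of_ci1_mult)
  then show ?thesis by (rule assoc_V_memI)
qed

lemma normM_assoc_V:
  assumes "hyperbolic_positive ip" "Z \<in> assoc_V sc B"
  shows "normM sc B ip Z = normV ip Z"
  using assms by (simp add: normM_def comp_e_assoc_V normV_nonneg)

lemma complete_assoc_V_if_complete_M: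
  assumes hp: "hyperbolic_positive ip"
    and complete: "complete_wrt UNIV (\<lambda>X Y. normM sc B ip (X - Y))"
  shows "complete_wrt (assoc_V sc B) (\<lambda>X Y. normV ip (X - Y))"
proof (rule complete_wrtI)
  fix f assume f_V: "\<And>n. f n \<in> assoc_V sc B"
    and cauchy: "cauchy_wrt (\<lambda>X Y. normV ip (X - Y)) f"
  have "cauchy_wrt (\<lambda>X Y. normM sc B ip (X - Y)) f"
    using cauchy zero_less_one
    by (rule cauchy_wrt_scaled_bound) (simp add: normM_assoc_V[OF hp] assoc_V_diff f_V)
  then obtain x where x: "converges_wrt (\<lambda>X Y. normM sc B ip (X - Y)) f x"
    using complete_wrtD[OF complete] by blast
  have "converges_wrt (\<lambda>X Y. normV ip (X - Y)) f (comp_e1 sc B x)"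
  proof (rule converges_wrt_scaled_bound[OF x])
    fix n
    have "f n - comp_e1 sc B x = comp_e1 sc B (f n - x)"
      using f_V by (simp add: comp_e_diff comp_e_assoc_V)
    then show "normV ip (f n - comp_e1 sc B x) \<le> sqrt 2 * normM sc B ip (f n - x)"
      using normV_comp_e_le(1) by metis
  qed simp
  then show "\<exists>x\<in>assoc_V sc B. converges_wrt (\<lambda>X Y. normV ip (X - Y)) f x"
    using comp_e_in_assoc_V by blast
qed

lemma cauchy_wrt_comp_e:
  assumes "cauchy_wrt (\<lambda>X Y. normM sc B ip (X - Y)) f"
  shows "cauchy_wrt (\<lambda>X Y. normV ip (X - Y)) (\<lambda>n. comp_e1 sc B (f n))"
    and "cauchy_wrt (\<lambda>X Y. normV ip (X - Y)) (\<lambda>n. comp_e2 sc B (f n))"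
  by (rule cauchy_wrt_scaled_bound[OF assms, where C = "sqrt 2"];
      simp add: normV_comp_e_le flip: comp_e_diff)+

lemma complete_M_if_complete_assoc_V:
  assumes hp: "hyperbolic_positive ip"
    and complete: "complete_wrt (assoc_V sc B) (\<lambda>X Y. normV ip (X - Y))"
  shows "complete_wrt UNIV (\<lambda>X Y. normM sc B ip (X - Y))"
proof (rule complete_wrtI)
  fix f assume cauchy: "cauchy_wrt (\<lambda>X Y. normM sc B ip (X - Y)) f"
  obtain z1 where "z1 \<in> assoc_V sc B"
    and z1: "converges_wrt (\<lambda>X Y. normV ip (X - Y)) (\<lambda>n. comp_e1 sc B (f n)) z1"
    using complete_wrtD[OF complete comp_e_in_assoc_V(1) cauchy_wrt_comp_e(1)[OF cauchy]] by blast
  obtain z2 where "z2 \<in> assoc_V sc B"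
    and z2: "converges_wrt (\<lambda>X Y. normV ip (X - Y)) (\<lambda>n. comp_e2 sc B (f n)) z2"
    using complete_wrtD[OF complete comp_e_in_assoc_V(2) cauchy_wrt_comp_e(2)[OF cauchy]] by blast
  define L where "L = sc bc_e1 z1 + sc bc_e2 z2"
  have L: "comp_e1 sc B L = z1" "comp_e2 sc B L = z2"
    unfolding L_def using \<open>z1 \<in> assoc_V sc B\<close> \<open>z2 \<in> assoc_V sc B\<close>
    by (simp_all add: comp_e_idempotent_sum)
  have "converges_wrt (\<lambda>X Y. normM sc B ip (X - Y)) f L"
  proof (rule converges_wrt_add_bound[OF z1 z2])
    fix n
    show "normM sc B ip (f n - L) \<le>
        normV ip (comp_e1 sc B (f n) - z1) + normV ip (comp_e2 sc B (f n) - z2)"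
      using normM_le_normV_comp_e[OF hp, of sc B "f n - L"] by (simp only: comp_e_diff L)
  qed
  then show "\<exists>x\<in>UNIV. converges_wrt (\<lambda>X Y. normM sc B ip (X - Y)) f x" by blast
qed

lemma complete_M_iff_complete_assoc_V:
  "hyperbolic_positive ip \<Longrightarrow>
    complete_wrt UNIV (\<lambda>X Y. normM sc B ip (X - Y)) \<longleftrightarrow>
    complete_wrt (assoc_V sc B) (\<lambda>X Y. normV ip (X - Y))"
  using complete_assoc_V_if_complete_M complete_M_if_complete_assoc_V by blast

lemma complex_Hilbert_space_assoc_V_iff_complete:
  assumes sp: "bicomplex_scalar_product sc ip" and hp: "hyperbolic_positive ip"
    and closed: "closed_on ip (assoc_V sc B)"
  shows "complex_Hilbert_space sc (assoc_V sc B) ip \<longleftrightarrow>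
    complete_wrt (assoc_V sc B) (\<lambda>X Y. normV ip (X - Y))"
proof -
  from sp have add: "ip X (Y1 + Y2) = ip X Y1 + ip X Y2"
    and scale: "ip X (sc \<alpha> Y) = \<alpha> * ip X Y"
    and sym: "ip X Y = conj3 (ip Y X)"
    and definite: "ip X X = 0 \<longleftrightarrow> X = 0" for X Y Y1 Y2 \<alpha>
    unfolding bicomplex_scalar_product_def by blast+
  have pos: "ip X X \<in> hyperbolic_pos" for X
    using hp unfolding hyperbolic_positive_def by blast
  let ?V = "assoc_V sc B"
  have "0 \<in> ?V" "\<forall>X\<in>?V. \<forall>Y\<in>?V. X + Y \<in> ?V" "\<forall>z. \<forall>X\<in>?V. sc (of_ci1 z) X \<in> ?V"
    by (simp_all add: assoc_V_zero assoc_V_add assoc_V_scale)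
  moreover have "\<forall>X\<in>?V. \<forall>Y\<in>?V. ip X Y \<in> Ci1"
    using closed unfolding closed_on_def .
  moreover have "\<forall>X\<in>?V. \<forall>Y1\<in>?V. \<forall>Y2\<in>?V. bc1 (ip X (Y1 + Y2)) = bc1 (ip X Y1) + bc1 (ip X Y2)"
    by (simp add: add)
  moreover have "\<forall>X\<in>?V. \<forall>Y\<in>?V. \<forall>z. bc1 (ip X (sc (of_ci1 z) Y)) = z * bc1 (ip X Y)"
    by (simp add: scale of_ci1_def)
  moreover have "\<forall>X\<in>?V. \<forall>Y\<in>?V. bc1 (ip X Y) = cnj (bc1 (ip Y X))"
    by (metis sym conj3_def bicomplex.sel(1))
  moreover have "\<forall>X\<in>?V. Im (bc1 (ip X X)) = 0 \<and> Re (bc1 (ip X X)) \<ge> 0"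
    using hyperbolic_pos_bc1_nonneg_real[OF pos] by blast
  moreover have "\<forall>X\<in>?V. bc1 (ip X X) = 0 \<longleftrightarrow> X = 0"
    using hyperbolic_pos_bc1_eq_0_iff[OF pos] definite by blast
  ultimately show ?thesis
    unfolding complex_Hilbert_space_def by argo
qed

end

theorem mainTheorem15:
  fixes sc :: "bicomplex \<Rightarrow> 'm::ab_group_add \<Rightarrow> 'm"
    and B :: "'m set"
    and ip :: "'m \<Rightarrow> 'm \<Rightarrow> bicomplex"
  assumes "free_T_module_fin_basis sc B"
    and "bicomplex_scalar_product sc ip"
    and "hyperbolic_positive ip"
    and "closed_on ip (assoc_V sc B)"
  shows "T_Hilbert_space sc B ip \<longleftrightarrow> complex_Hilbert_space sc (assoc_V sc B) ip"
  unfolding T_Hilbert_space_def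
  using assms complete_M_iff_complete_assoc_V[OF assms(1,3)]
    complex_Hilbert_space_assoc_V_iff_complete[OF assms]
  by simp

end
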